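(* Let $k\ge s\ge1$ and let the distinct abscissae $\tau_1,\dots,\tau_k\in[0,1]$ be such that the interpolatory quadrature formula $(\omega_i,\tau_i)_{i=1}^k$ has order at least $2s$ (i.e. is exact for all polynomials of degree at most $2s-1$). Then HBVM$(k,s)$ is perfectly $A$-stable, whatever the choice of the fundamental abscissae $c_1,\dots,c_s$ among the $\{\tau_i\}$.
   Context: $\omega_i=\int_0^1\ell_i(t)\,\mathrm{d}t$ with $\ell_i$ the Lagrange polynomials on the nodes $\{\tau_i\}$. Let $P_i(t)=\sqrt{2i-1}\,\hat P_{i-1}(t)$, where $\hat P_{i-1}$ is the shifted Legendre polynomial of degree $i-1$ on $[0,1]$ (so $\{P_i\}$ is orthonormal on $[0,1]$). HBVM$(k,s)$ is the Runge--Kutta method with abscissae $\tau_i$, weights $\omega_i$ and Butcher matrix $A=\mathcal I_s\mathcal P_s^T\Omega$, where $\Omega=\mathrm{diag}(\omega_1,\dots,\omega_k)$, $(\mathcal I_s)_{ij}=\int_0^{\tau_i}P_j(x)\,\mathrm{d}x$, $(\mathcal P_s)_{ij}=P_j(\tau_i)$ ($i=1,\dots,k$, $j=1,\dots,s$). The $\{\tau_i\}$ are split into $s$ fundamental and $k-s$ silent abscissae. A method is perfectly $A$-stable if, applied to the test equation $y'=\lambda y$, its region of absolute stability $\{q=h\lambda\in\mathbb C: |R(q)|<1\}$ coincides exactly with the open left half complex plane $\mathbb C^-$. *)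

theory Defs
  imports "HOL-Analysis.Analysis" "HOL-Computational_Algebra.Polynomial"
begin

definition shifted_legendre :: "nat \<Rightarrow> real \<Rightarrow> real" where
  "shifted_legendre n x =
     (\<Sum>j\<le>n. (-1) ^ (n + j) * real (n choose j) * real ((n + j) choose j) * x ^ j)"

text \<open>Orthonormal basis, 0-based: orth_leg j = P_(j+1) = sqrt(2j+1) * shifted Legendre of degree j.\<close>
definition orth_leg :: "nat \<Rightarrow> real \<Rightarrow> real" where
  "orth_leg j x = sqrt (2 * real j + 1) * shifted_legendre j x"

definition lagrange_basis :: "(nat \<Rightarrow> real) \<Rightarrow> nat \<Rightarrow> nat \<Rightarrow> real \<Rightarrow> real" where
  "lagrange_basis \<tau> k i t = (\<Prod>m\<in>{..<k} - {i}. (t - \<tau> m) / (\<tau> i - \<tau> m))"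

definition quad_weight :: "(nat \<Rightarrow> real) \<Rightarrow> nat \<Rightarrow> nat \<Rightarrow> real" where
  "quad_weight \<tau> k i = integral {0..1} (lagrange_basis \<tau> k i)"

text \<open>Butcher matrix A = I_s P_s^T Omega of HBVM(k,s), 0-based indices.\<close>
definition hbvm_A :: "(nat \<Rightarrow> real) \<Rightarrow> nat \<Rightarrow> nat \<Rightarrow> nat \<Rightarrow> nat \<Rightarrow> real" where
  "hbvm_A \<tau> k s i j =
     (\<Sum>l<s. integral {0..\<tau> i} (orth_leg l) * orth_leg l (\<tau> j) * quad_weight \<tau> k j)"

text \<open>Stage equations of a k-stage RK method (A,b) applied to y' = lambda y with q = h lambda, y0 = 1.\<close>
definition rk_stages_ok :: "(nat \<Rightarrow> nat \<Rightarrow> real) \<Rightarrow> nat \<Rightarrow> complex \<Rightarrow> (nat \<Rightarrow> complex) \<Rightarrow> bool" where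
  "rk_stages_ok A k q Y \<longleftrightarrow> (\<forall>i. k \<le> i \<longrightarrow> Y i = 0) \<and>
     (\<forall>i<k. Y i = 1 + q * (\<Sum>j<k. complex_of_real (A i j) * Y j))"

text \<open>Stability function R(q) = 1 + q b^T (I - qA)^{-1} e (meaningful when the stage system is uniquely solvable).\<close>
definition rk_stability_fun :: "(nat \<Rightarrow> nat \<Rightarrow> real) \<Rightarrow> (nat \<Rightarrow> real) \<Rightarrow> nat \<Rightarrow> complex \<Rightarrow> complex" where
  "rk_stability_fun A b k q =
     (let Y = (THE Y. rk_stages_ok A k q Y) in 1 + q * (\<Sum>j<k. complex_of_real (b j) * Y j))"

definition rk_abs_stability_region :: "(nat \<Rightarrow> nat \<Rightarrow> real) \<Rightarrow> (nat \<Rightarrow> real) \<Rightarrow> nat \<Rightarrow> complex set" where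
  "rk_abs_stability_region A b k =
     {q. (\<exists>!Y. rk_stages_ok A k q Y) \<and> cmod (rk_stability_fun A b k q) < 1}"

definition perfectly_A_stable :: "(nat \<Rightarrow> nat \<Rightarrow> real) \<Rightarrow> (nat \<Rightarrow> real) \<Rightarrow> nat \<Rightarrow> bool" where
  "perfectly_A_stable A b k \<longleftrightarrow> rk_abs_stability_region A b k = {q. Re q < 0}"

end

theory Submission
  imports Defs "Jordan_Normal_Form.Determinant"
begin

text \<open>Let \<open>Y\<close> be the stage vector for \<open>y' = \<lambda>y\<close>, \<open>q = h\<lambda>\<close>. Since \<open>A = \<I>\<^sub>s \<P>\<^sub>s\<^sup>T \<Omega>\<close>, everything
  factors through the vector \<open>\<gamma> = \<P>\<^sub>s\<^sup>T \<Omega> Y\<close> of discrete Legendre coefficients: it solves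
  \<open>\<gamma> = e\<^sub>1 + q X\<^sub>s \<gamma>\<close> with \<open>X\<^sub>s = \<P>\<^sub>s\<^sup>T \<Omega> \<I>\<^sub>s\<close>, and \<open>R(q) = 1 + q \<gamma>\<^sub>1\<close>.
  If \<open>F\<^sub>l\<close> is the antiderivative of \<open>P\<^sub>l\<close> vanishing at 0, then \<open>P\<^sub>l F\<^sub>m + P\<^sub>m F\<^sub>l = (F\<^sub>l F\<^sub>m)'\<close> has degree
  below \<open>2s\<close>, so exactness of the quadrature gives \<open>X\<^sub>s + X\<^sub>s\<^sup>T = e\<^sub>1 e\<^sub>1\<^sup>T\<close>. Pairing the system with
  \<open>\<gamma>\<close> then yields the energy identity \<open>|R(q)|\<^sup>2 = 1 + 2 Re q \<parallel>\<gamma>\<parallel>\<^sup>2\<close>, so \<open>|R(q)| < 1\<close> exactly when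
  \<open>Re q < 0\<close>; for \<open>Re q < 0\<close> the same identity forces the homogeneous system to have only the
  trivial solution, so the stage equations are uniquely solvable.\<close>

lemma square_system_solvable_if_injective:
  fixes M :: "nat \<Rightarrow> nat \<Rightarrow> 'a::field" and b :: "nat \<Rightarrow> 'a"
  assumes inj: "\<And>v. \<forall>l<n. (\<Sum>m<n. M l m * v m) = 0 \<Longrightarrow> \<forall>l<n. v l = 0"
  shows "\<exists>v. \<forall>l<n. (\<Sum>m<n. M l m * v m) = b l"
proof -
  define A where "A = Matrix.mat n n (\<lambda>(i, j). M i j)"
  have A: "A \<in> carrier_mat n n"
    unfolding A_def by auto
  have mult_A: "(A *\<^sub>v v) $ l = (\<Sum>m<n. M l m * v $ m)" if "v \<in> carrier_vec n" "l < n" for v l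
    using that by (simp add: A_def mult_mat_vec_def scalar_prod_def lessThan_atLeast0)
  have "det A \<noteq> 0"
  proof
    assume "det A = 0"
    then obtain v where v: "v \<in> carrier_vec n" "v \<noteq> 0\<^sub>v n" "A *\<^sub>v v = 0\<^sub>v n"
      using det_0_iff_vec_prod_zero_field[OF A] by auto
    have "\<forall>l<n. (\<Sum>m<n. M l m * v $ m) = 0"
      using v mult_A by (metis index_zero_vec(1))
    with inj have "\<forall>l<n. v $ l = 0"
      by blast
    with v(1,2) show False
      by (metis eq_vecI index_zero_vec carrier_vecD)
  qed
  then obtain Q where Q: "Q \<in> carrier_mat n n" "A * Q = 1\<^sub>m n"
    using det_non_zero_imp_unit[OF A] unfolding Units_def ring_mat_def by auto
  define x where "x = Q *\<^sub>v Matrix.vec n b"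
  have x: "x \<in> carrier_vec n"
    unfolding x_def using Q by auto
  have "A *\<^sub>v x = Matrix.vec n b"
    unfolding x_def using Q A by (simp add: assoc_mult_mat_vec[symmetric])
  then have "\<forall>l<n. (\<Sum>m<n. M l m * x $ m) = b l"
    using mult_A[OF x] by (metis index_vec)
  then show ?thesis
    by blast
qed

lemma alternating_binomial_sum_Suc:
  fixes f :: "nat \<Rightarrow> int"
  shows "(\<Sum>j\<le>Suc n. (-1)^j * int (Suc n choose j) * f j) =
         (\<Sum>j\<le>n. (-1)^j * int (n choose j) * f j) - (\<Sum>j\<le>n. (-1)^j * int (n choose j) * f (Suc j))"
proof -
  have "(\<Sum>j\<le>Suc n. (-1)^j * int (Suc n choose j) * f j) =
        f 0 + (\<Sum>j\<le>n. (-1)^(Suc j) * int (Suc n choose Suc j) * f (Suc j))"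
    by (subst sum.atMost_Suc_shift) simp
  also have "\<dots> = f 0 + (\<Sum>j\<le>n. (-1)^(Suc j) * int (n choose Suc j) * f (Suc j)
                 - (-1)^j * int (n choose j) * f (Suc j))"
    by (intro arg_cong2[where f="(+)"] refl sum.cong) (auto simp: algebra_simps)
  also have "\<dots> = f 0 + (\<Sum>j\<le>n. (-1)^(Suc j) * int (n choose Suc j) * f (Suc j))
                 - (\<Sum>j\<le>n. (-1)^j * int (n choose j) * f (Suc j))"
    by (simp add: sum_subtractf)
  also have "f 0 + (\<Sum>j\<le>n. (-1)^(Suc j) * int (n choose Suc j) * f (Suc j))
           = (\<Sum>j\<le>Suc n. (-1)^j * int (n choose j) * f j)"
    by (subst sum.atMost_Suc_shift) simp
  also have "\<dots> = (\<Sum>j\<le>n. (-1)^j * int (n choose j) * f j)"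
    by simp
  finally show ?thesis .
qed

text \<open>The \<open>n\<close>-th forward difference of the degree-\<open>r\<close> polynomial \<open>j \<mapsto> (m + j choose r)\<close> vanishes
  for \<open>r < n\<close>.\<close>
lemma alternating_binomial_sum_choose_eq_0:
  "r < n \<Longrightarrow> (\<Sum>j\<le>n. (-1)^j * int (n choose j) * int (m + j choose r)) = 0"
proof (induction n arbitrary: m r)
  case 0
  then show ?case by simp
next
  case (Suc n)
  have step: "(\<Sum>j\<le>Suc n. (-1)^j * int (Suc n choose j) * int (m + j choose r)) =
     (\<Sum>j\<le>n. (-1)^j * int (n choose j) * int (m + j choose r)) -
     (\<Sum>j\<le>n. (-1)^j * int (n choose j) * int (Suc m + j choose r))"
    using alternating_binomial_sum_Suc[of n "\<lambda>j. int (m + j choose r)"] by simp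
  consider "r < n" | "r = n" "n = 0" | n' where "r = n" "n = Suc n'"
    using Suc.prems not0_implies_Suc by force
  then show ?case
  proof cases
    case 1
    then show ?thesis
      using step Suc.IH[of r m] Suc.IH[of r "Suc m"] by simp
  next
    case 2
    then show ?thesis
      using step by simp
  next
    case (3 n')
    have "(\<Sum>j\<le>n. (-1)^j * int (n choose j) * int (Suc m + j choose r)) =
          (\<Sum>j\<le>n. (-1)^j * int (n choose j) * int (m + j choose r)) +
          (\<Sum>j\<le>n. (-1)^j * int (n choose j) * int (m + j choose n'))"
      unfolding sum.distrib[symmetric] using 3 by (intro sum.cong) (auto simp: algebra_simps)
    moreover have "(\<Sum>j\<le>n. (-1)^j * int (n choose j) * int (m + j choose n')) = 0"
      using Suc.IH[of n' m] 3 by simp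
    ultimately show ?thesis
      using step by simp
  qed
qed

lemma sum_shifted_legendre_coeff_div_Suc:
  assumes "1 \<le> n"
  shows "(\<Sum>j\<le>n. (-1)^(n + j) * real (n choose j) * real ((n + j) choose j) / real (Suc j)) = 0"
proof -
  have absorb: "real ((n + j) choose j) / real (Suc j) = real (n + j choose (n - 1)) / real n" for j
  proof -
    have "Suc j * (n + j choose Suc j) = (n + j) * ((n + j - 1) choose j)"
      by (rule binomial_absorption)
    also have "\<dots> = n * (n + j choose j)"
      using binomial_absorb_comp[of "n + j" j] by simp
    also have "(n + j choose Suc j) = (n + j choose (n - 1))"
      using assms by (subst binomial_symmetric) auto
    finally have "real (Suc j) * real (n + j choose (n - 1)) = real n * real (n + j choose j)"
      by (metis of_nat_mult)
    then show ?thesis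
      using assms by (simp add: frac_eq_eq mult.commute)
  qed
  have "(\<Sum>j\<le>n. (-1)^(n + j) * real (n choose j) * real ((n + j) choose j) / real (Suc j))
      = (\<Sum>j\<le>n. (-1)^n / real n * of_int ((-1)^j * int (n choose j) * int (n + j choose (n - 1))))"
  proof (intro sum.cong refl)
    fix j
    have "(-1)^(n + j) * real (n choose j) * real ((n + j) choose j) / real (Suc j)
        = (-1)^n * (-1)^j * real (n choose j) * (real ((n + j) choose j) / real (Suc j))"
      by (simp add: power_add)
    also have "\<dots> = (-1)^n * (-1)^j * real (n choose j) * (real (n + j choose (n - 1)) / real n)"
      by (simp only: absorb)
    also have "\<dots> = (-1)^n / real n * of_int ((-1)^j * int (n choose j) * int (n + j choose (n - 1)))"
      by simp
    finally show "(-1)^(n + j) * real (n choose j) * real ((n + j) choose j) / real (Suc j)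
        = (-1)^n / real n * of_int ((-1)^j * int (n choose j) * int (n + j choose (n - 1)))" .
  qed
  also have "\<dots> = (-1)^n / real n * of_int (\<Sum>j\<le>n. (-1)^j * int (n choose j) * int (n + j choose (n - 1)))"
    by (simp only: of_int_sum sum_distrib_left)
  also have "\<dots> = 0"
    using alternating_binomial_sum_choose_eq_0[of "n - 1" n n] assms by simp
  finally show ?thesis .
qed

definition antideriv :: "'a::field_char_0 poly \<Rightarrow> 'a poly" where
  "antideriv p = (\<Sum>i\<le>degree p. monom (coeff p i / of_nat (Suc i)) (Suc i))"

lemma pderiv_sum: "pderiv (\<Sum>i\<in>A. f i) = (\<Sum>i\<in>A. pderiv (f i))"
  by (induction A rule: infinite_finite_induct) (simp_all add: pderiv_add)

lemma pderiv_antideriv: "pderiv (antideriv p) = p"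
proof -
  have "pderiv (antideriv p) = (\<Sum>i\<le>degree p. monom (coeff p i) i)"
    unfolding antideriv_def pderiv_sum pderiv_monom
    by (intro sum.cong refl) (simp del: of_nat_Suc)
  then show ?thesis
    by (simp add: poly_as_sum_of_monoms)
qed

lemma degree_antideriv_le: "degree (antideriv p) \<le> Suc (degree p)"
  unfolding antideriv_def by (rule degree_sum_le) (auto intro: order.trans[OF degree_monom_le])

lemma poly_antideriv:
  assumes "degree p \<le> n"
  shows "poly (antideriv p) x = (\<Sum>i\<le>n. coeff p i * x ^ Suc i / of_nat (Suc i))"
proof -
  have "poly (antideriv p) x = (\<Sum>i\<le>degree p. coeff p i * x ^ Suc i / of_nat (Suc i))"
    by (simp add: antideriv_def poly_sum poly_monom)
  also have "\<dots> = (\<Sum>i\<le>n. coeff p i * x ^ Suc i / of_nat (Suc i))"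
    using assms by (intro sum.mono_neutral_left) (auto simp: coeff_eq_0)
  finally show ?thesis .
qed

lemma poly_antideriv_0 [simp]: "poly (antideriv p) 0 = 0"
  by (simp add: poly_antideriv[OF order_refl])

lemma integral_poly_pderiv:
  fixes p :: "real poly"
  assumes "a \<le> b"
  shows "integral {a..b} (poly (pderiv p)) = poly p b - poly p a"
proof (rule integral_unique, rule fundamental_theorem_of_calculus[OF assms])
  fix x
  show "(poly p has_vector_derivative poly (pderiv p) x) (at x within {a..b})"
    using poly_DERIV[of p x]
    by (simp add: has_real_derivative_iff_has_vector_derivative has_vector_derivative_at_within)
qed

lemma integral_poly_eq_antideriv:
  fixes p :: "real poly"
  assumes "0 \<le> t"
  shows "integral {0..t} (poly p) = poly (antideriv p) t"
  using integral_poly_pderiv[OF assms, of "antideriv p"] by (simp add: pderiv_antideriv)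

definition shifted_legendre_poly :: "nat \<Rightarrow> real poly" where
  "shifted_legendre_poly n =
     (\<Sum>j\<le>n. monom ((-1) ^ (n + j) * real (n choose j) * real ((n + j) choose j)) j)"

lemma poly_shifted_legendre_poly: "poly (shifted_legendre_poly n) = shifted_legendre n"
  by (simp add: fun_eq_iff shifted_legendre_poly_def shifted_legendre_def poly_sum poly_monom)

lemma coeff_shifted_legendre_poly:
  "coeff (shifted_legendre_poly n) j =
     (if j \<le> n then (-1) ^ (n + j) * real (n choose j) * real ((n + j) choose j) else 0)"
  by (simp add: shifted_legendre_poly_def coeff_sum)

lemma degree_shifted_legendre_poly_le: "degree (shifted_legendre_poly n) \<le> n"
  by (simp add: degree_le coeff_shifted_legendre_poly)

lemma integral_shifted_legendre: "integral {0..1} (shifted_legendre n) = (if n = 0 then 1 else 0)"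
proof -
  have "integral {0..1} (shifted_legendre n) =
        (\<Sum>j\<le>n. (-1)^(n + j) * real (n choose j) * real ((n + j) choose j) / real (Suc j))"
    by (simp flip: poly_shifted_legendre_poly add: integral_poly_eq_antideriv
        poly_antideriv[OF degree_shifted_legendre_poly_le] coeff_shifted_legendre_poly)
  then show ?thesis
    using sum_shifted_legendre_coeff_div_Suc[of n] by simp
qed

definition orth_leg_poly :: "nat \<Rightarrow> real poly" where
  "orth_leg_poly l = Polynomial.smult (sqrt (2 * real l + 1)) (shifted_legendre_poly l)"

lemma poly_orth_leg_poly: "poly (orth_leg_poly l) = orth_leg l"
  by (simp add: fun_eq_iff orth_leg_poly_def orth_leg_def poly_shifted_legendre_poly)

lemma degree_orth_leg_poly_le: "degree (orth_leg_poly l) \<le> l"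
  using degree_shifted_legendre_poly_le[of l] by (simp add: orth_leg_poly_def)

lemma integral_orth_leg: "integral {0..1} (orth_leg l) = (if l = 0 then 1 else 0)"
  using integral_shifted_legendre[of l] by (simp add: orth_leg_def[abs_def])

lemma poly_antideriv_orth_leg_1 [simp]:
  "poly (antideriv (orth_leg_poly l)) 1 = (if l = 0 then 1 else 0)"
  using integral_poly_eq_antideriv[of 1 "orth_leg_poly l"]
  by (simp add: poly_orth_leg_poly integral_orth_leg)

lemma orth_leg_0 [simp]: "orth_leg 0 x = 1"
  by (simp add: orth_leg_def shifted_legendre_def)

lemma cmod_one_plus_power2: "(cmod (1 + z))^2 = 1 + 2 * Re z + (cmod z)^2"
  unfolding cmod_power2 by (simp add: power2_eq_square algebra_simps)

definition gamma_system :: "(nat \<Rightarrow> nat \<Rightarrow> real) \<Rightarrow> nat \<Rightarrow> real \<Rightarrow> complex \<Rightarrow> (nat \<Rightarrow> complex) \<Rightarrow> bool" where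
  "gamma_system X s c q g \<longleftrightarrow>
     (\<forall>l<s. g l = of_real c * (if l = 0 then 1 else 0) + q * (\<Sum>m<s. of_real (X l m) * g m))"

lemma gamma_system_iff_linear:
  "gamma_system X s c q g \<longleftrightarrow>
     (\<forall>l<s. (\<Sum>m<s. ((if l = m then 1 else 0) - q * of_real (X l m)) * g m) = of_real c * (if l = 0 then 1 else 0))"
proof -
  have "(g l = of_real c * (if l = 0 then 1 else 0) + q * (\<Sum>m<s. of_real (X l m) * g m)) \<longleftrightarrow>
        (\<Sum>m<s. ((if l = m then 1 else 0) - q * of_real (X l m)) * g m) = of_real c * (if l = 0 then 1 else 0)"
    if "l < s" for l
  proof -
    have "(\<Sum>m<s. (if l = m then 1 else 0) * g m) = (\<Sum>m<s. if l = m then g m else 0)"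
      by (intro sum.cong) auto
    then have lin: "(\<Sum>m<s. ((if l = m then 1 else 0) - q * of_real (X l m)) * g m)
                   = g l - q * (\<Sum>m<s. of_real (X l m) * g m)"
      using that by (simp add: left_diff_distrib sum_subtractf sum_distrib_left mult.assoc)
    show ?thesis
      by (simp only: lin diff_eq_eq)
  qed
  then show ?thesis
    unfolding gamma_system_def by blast
qed

lemma gamma_system_diff:
  assumes "gamma_system X s c q g" and "gamma_system X s c q h"
  shows "gamma_system X s 0 q (\<lambda>l. g l - h l)"
  unfolding gamma_system_def
proof (intro allI impI)
  fix l assume "l < s"
  then have "g l = of_real c * (if l = 0 then 1 else 0) + q * (\<Sum>m<s. of_real (X l m) * g m)"
    and "h l = of_real c * (if l = 0 then 1 else 0) + q * (\<Sum>m<s. of_real (X l m) * h m)"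
    using assms unfolding gamma_system_def by blast+
  then show "g l - h l = of_real 0 * (if l = 0 then 1 else 0) + q * (\<Sum>m<s. of_real (X l m) * (g m - h m))"
    by (simp add: right_diff_distrib sum_subtractf)
qed

locale skew_plus_rank_one =
  fixes X :: "nat \<Rightarrow> nat \<Rightarrow> real" and s :: nat
  assumes s_pos: "0 < s"
    and add_transpose: "\<And>l m. l < s \<Longrightarrow> m < s \<Longrightarrow> X l m + X m l = (if l = 0 \<and> m = 0 then 1 else 0)"
begin

lemma Re_hermitian_form:
  "2 * Re (\<Sum>l<s. \<Sum>m<s. of_real (X l m) * (cnj (g l) * g m)) = (cmod (g 0))^2"
proof -
  define Q where "Q = (\<Sum>l<s. \<Sum>m<s. of_real (X l m) * (cnj (g l) * g m))"
  have "cnj Q = (\<Sum>l<s. \<Sum>m<s. of_real (X m l) * (cnj (g l) * g m))"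
    unfolding Q_def cnj_sum by (subst sum.swap) (simp add: mult.commute)
  then have "Q + cnj Q = (\<Sum>l<s. \<Sum>m<s. of_real (X l m + X m l) * (cnj (g l) * g m))"
    unfolding Q_def by (simp add: distrib_right sum.distrib)
  also have "\<dots> = (\<Sum>l<s. \<Sum>m<s. if l = 0 \<and> m = 0 then cnj (g 0) * g 0 else 0)"
    by (intro sum.cong refl) (simp add: add_transpose)
  also have "\<dots> = cnj (g 0) * g 0"
  proof -
    have inner: "(\<Sum>m<s. if l = 0 \<and> m = 0 then z else 0) = (if l = 0 then z else 0)"
      for l and z :: complex
      using s_pos by (cases "l = 0") simp_all
    show ?thesis
      using s_pos by (simp only: inner) simp
  qed
  also have "\<dots> = of_real ((cmod (g 0))^2)"
    by (metis complex_norm_square mult.commute of_real_power)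
  finally show ?thesis
    unfolding Q_def[symmetric] by (metis Re_complex_of_real complex_add_cnj mult_2)
qed

text \<open>Multiply the \<open>l\<close>-th equation by \<open>cnj (g l)\<close> and sum over \<open>l\<close>; as \<open>\<parallel>g\<parallel>\<^sup>2\<close> is real, it equals its
  conjugate, and the Hermitian form of \<open>X\<close> contributes only its real part.\<close>
lemma energy_identity:
  assumes "gamma_system X s c q g"
  shows "Re q * (\<Sum>l<s. (cmod (g l))^2) = c * Re (q * g 0) + (cmod q)^2 * (cmod (g 0))^2 / 2"
proof -
  define N where "N = (\<Sum>l<s. cnj (g l) * g l)"
  define Q where "Q = (\<Sum>l<s. \<Sum>m<s. of_real (X l m) * (cnj (g l) * g m))"
  have N_real: "N = of_real (\<Sum>l<s. (cmod (g l))^2)"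
    unfolding N_def of_real_sum by (intro sum.cong refl) (metis complex_norm_square mult.commute)
  have "N = (\<Sum>l<s. (if l = 0 then of_real c * cnj (g 0) else 0)
                   + q * (\<Sum>m<s. of_real (X l m) * (cnj (g l) * g m)))"
    unfolding N_def
  proof (intro sum.cong refl)
    fix l assume "l \<in> {..<s}"
    then have "g l = of_real c * (if l = 0 then 1 else 0) + q * (\<Sum>m<s. of_real (X l m) * g m)"
      using assms by (simp add: gamma_system_def)
    then have "cnj (g l) * g l = cnj (g l) * (of_real c * (if l = 0 then 1 else 0))
                 + q * (\<Sum>m<s. cnj (g l) * (of_real (X l m) * g m))"
      by (metis distrib_left mult.left_commute sum_distrib_left)
    then show "cnj (g l) * g l = (if l = 0 then of_real c * cnj (g 0) else 0)
                 + q * (\<Sum>m<s. of_real (X l m) * (cnj (g l) * g m))"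
      by (auto simp: algebra_simps)
  qed
  also have "\<dots> = of_real c * cnj (g 0) + q * Q"
    unfolding sum.distrib Q_def sum_distrib_left[symmetric] using s_pos by simp
  finally have N_eq: "N = of_real c * cnj (g 0) + q * Q" .
  have "q * N = q * cnj N"
    using N_real by simp
  also have "\<dots> = of_real c * (q * g 0) + (q * cnj q) * cnj Q"
    unfolding N_eq by (simp add: algebra_simps)
  also have "q * cnj q = of_real ((cmod q)^2)"
    by (metis complex_norm_square of_real_power)
  finally have "Re (q * N) = c * Re (q * g 0) + (cmod q)^2 * Re Q"
    by simp
  then show ?thesis
    using N_real Re_hermitian_form[of g] unfolding Q_def by simp
qed

lemma stability_identity:
  assumes "gamma_system X s 1 q g"
  shows "(cmod (1 + q * g 0))^2 = 1 + 2 * Re q * (\<Sum>l<s. (cmod (g l))^2)"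
  using energy_identity[OF assms] by (simp add: cmod_one_plus_power2 norm_mult power_mult_distrib)

lemma gamma_system_homogeneous_eq_0:
  assumes "Re q < 0" and "gamma_system X s 0 q g" and "l < s"
  shows "g l = 0"
proof -
  have "Re q * (\<Sum>l<s. (cmod (g l))^2) = (cmod q)^2 * (cmod (g 0))^2 / 2"
    using energy_identity[OF assms(2)] by simp
  also have "\<dots> \<ge> 0"
    by simp
  finally have "Re q * (\<Sum>l<s. (cmod (g l))^2) \<ge> 0" .
  with \<open>Re q < 0\<close> have "(\<Sum>l<s. (cmod (g l))^2) \<le> 0"
    by (auto simp: zero_le_mult_iff)
  then have "(\<Sum>l<s. (cmod (g l))^2) = 0"
    by (meson antisym sum_nonneg zero_le_power2)
  then show ?thesis
    using \<open>l < s\<close> by (simp add: sum_nonneg_eq_0_iff)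
qed

lemma gamma_system_unique:
  assumes "Re q < 0" and "gamma_system X s c q g" and "gamma_system X s c q h" and "l < s"
  shows "g l = h l"
  using gamma_system_homogeneous_eq_0[OF assms(1) gamma_system_diff[OF assms(2,3)] assms(4)] by simp

lemma gamma_system_solvable:
  assumes "Re q < 0"
  shows "\<exists>g. gamma_system X s c q g"
  unfolding gamma_system_iff_linear
proof (rule square_system_solvable_if_injective)
  fix v assume "\<forall>l<s. (\<Sum>m<s. ((if l = m then 1 else 0) - q * of_real (X l m)) * v m) = 0"
  then have "gamma_system X s 0 q v"
    by (simp add: gamma_system_iff_linear)
  then show "\<forall>l<s. v l = 0"
    using gamma_system_homogeneous_eq_0[OF assms] by blast
qed

lemma gamma_system_norm_pos:
  assumes "gamma_system X s 1 q g"
  shows "0 < (\<Sum>l<s. (cmod (g l))^2)"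
proof (rule ccontr)
  assume "\<not> ?thesis"
  then have "(\<Sum>l<s. (cmod (g l))^2) = 0"
    by (meson antisym not_le sum_nonneg zero_le_power2)
  then have "\<forall>l<s. g l = 0"
    by (simp add: sum_nonneg_eq_0_iff)
  moreover have "g 0 = 1 + q * (\<Sum>m<s. of_real (X 0 m) * g m)"
    using assms s_pos by (simp add: gamma_system_def)
  ultimately show False
    using s_pos by simp
qed

end

lemma rk_stability_fun_eq:
  assumes "\<exists>!Y. rk_stages_ok A k q Y" and "rk_stages_ok A k q Y"
  shows "rk_stability_fun A b k q = 1 + q * (\<Sum>j<k. of_real (b j) * Y j)"
proof -
  have "(THE Y. rk_stages_ok A k q Y) = Y"
    using assms by (metis the1_equality)
  then show ?thesis
    by (simp add: rk_stability_fun_def)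
qed

locale hbvm =
  fixes \<tau> :: "nat \<Rightarrow> real" and k s :: nat
  assumes s_pos: "0 < s"
    and nodes_in_unit_interval: "\<And>i. i < k \<Longrightarrow> \<tau> i \<in> {0..1}"
    and quadrature_exact: "\<And>p :: real poly. degree p < 2 * s \<Longrightarrow>
           (\<Sum>i<k. quad_weight \<tau> k i * poly p (\<tau> i)) = integral {0..1} (poly p)"
begin

text \<open>\<open>Is\<close> and \<open>Xs\<close> are the matrices \<open>\<I>\<^sub>s\<close> and \<open>X\<^sub>s = \<P>\<^sub>s\<^sup>T \<Omega> \<I>\<^sub>s\<close> of the paper, \<open>gamma Y\<close> is
  \<open>\<P>\<^sub>s\<^sup>T \<Omega> Y\<close>, and \<open>stages q g\<close> is the stage vector \<open>e + q \<I>\<^sub>s g\<close> rebuilt from such a vector.\<close>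
definition Is :: "nat \<Rightarrow> nat \<Rightarrow> real" where
  "Is i l = integral {0..\<tau> i} (orth_leg l)"

definition Xs :: "nat \<Rightarrow> nat \<Rightarrow> real" where
  "Xs l m = (\<Sum>j<k. quad_weight \<tau> k j * orth_leg l (\<tau> j) * Is j m)"

definition gamma :: "(nat \<Rightarrow> complex) \<Rightarrow> nat \<Rightarrow> complex" where
  "gamma Y l = (\<Sum>j<k. of_real (quad_weight \<tau> k j * orth_leg l (\<tau> j)) * Y j)"

definition stages :: "complex \<Rightarrow> (nat \<Rightarrow> complex) \<Rightarrow> nat \<Rightarrow> complex" where
  "stages q g i = (if i < k then 1 + q * (\<Sum>l<s. of_real (Is i l) * g l) else 0)"

lemma quadrature_orth_leg:
  assumes "l < s"
  shows "(\<Sum>j<k. quad_weight \<tau> k j * orth_leg l (\<tau> j)) = (if l = 0 then 1 else 0)"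
proof -
  have "degree (orth_leg_poly l) < 2 * s"
    using degree_orth_leg_poly_le[of l] assms by linarith
  then show ?thesis
    using quadrature_exact[of "orth_leg_poly l"] by (simp add: poly_orth_leg_poly integral_orth_leg)
qed

lemma Is_eq_antideriv:
  assumes "i < k"
  shows "Is i l = poly (antideriv (orth_leg_poly l)) (\<tau> i)"
  using nodes_in_unit_interval[OF assms] integral_poly_eq_antideriv[of "\<tau> i" "orth_leg_poly l"]
  by (simp add: Is_def poly_orth_leg_poly)

text \<open>\<open>P\<^sub>l F\<^sub>m + P\<^sub>m F\<^sub>l = (F\<^sub>l F\<^sub>m)'\<close> has degree below \<open>2s\<close>, so the quadrature integrates it exactly.\<close>
lemma Xs_add_transpose:
  assumes "l < s" and "m < s"
  shows "Xs l m + Xs m l = (if l = 0 \<and> m = 0 then 1 else 0)"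
proof -
  define F where "F n = antideriv (orth_leg_poly n)" for n
  define R where "R = F l * F m"
  have pderiv_R: "pderiv R = orth_leg_poly l * F m + orth_leg_poly m * F l"
    by (simp add: R_def F_def pderiv_mult pderiv_antideriv algebra_simps)
  have "degree (F n) \<le> Suc n" for n
    unfolding F_def using degree_antideriv_le degree_orth_leg_poly_le by (meson Suc_le_mono order.trans)
  then have "degree R \<le> Suc l + Suc m"
    unfolding R_def by (meson add_mono degree_mult_le order.trans)
  then have "degree (pderiv R) < 2 * s"
    using assms by (simp add: degree_pderiv)
  have "Xs l m + Xs m l = (\<Sum>j<k. quad_weight \<tau> k j * poly (pderiv R) (\<tau> j))"
    unfolding Xs_def sum.distrib[symmetric] pderiv_R
    by (intro sum.cong refl) (simp add: Is_eq_antideriv F_def poly_orth_leg_poly algebra_simps)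
  also have "\<dots> = integral {0..1} (poly (pderiv R))"
    by (rule quadrature_exact) fact
  also have "\<dots> = poly R 1 - poly R 0"
    by (rule integral_poly_pderiv) simp
  also have "\<dots> = (if l = 0 \<and> m = 0 then 1 else 0)"
    by (simp add: R_def F_def)
  finally show ?thesis .
qed

sublocale skew_plus_rank_one Xs s
  by unfold_locales (simp_all add: s_pos Xs_add_transpose)

lemma hbvm_A_stage_sum:
  "(\<Sum>j<k. of_real (hbvm_A \<tau> k s i j) * Y j) = (\<Sum>l<s. of_real (Is i l) * gamma Y l)"
proof -
  have "(\<Sum>j<k. of_real (hbvm_A \<tau> k s i j) * Y j) =
        (\<Sum>j<k. \<Sum>l<s. of_real (Is i l) * (of_real (quad_weight \<tau> k j * orth_leg l (\<tau> j)) * Y j))"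
    unfolding hbvm_A_def Is_def of_real_sum sum_distrib_right
    by (intro sum.cong refl) (simp add: algebra_simps)
  also have "\<dots> = (\<Sum>l<s. of_real (Is i l) * gamma Y l)"
    unfolding gamma_def sum_distrib_left by (rule sum.swap)
  finally show ?thesis .
qed

lemma gamma_of_stage_form:
  assumes "\<forall>j<k. Y j = 1 + q * (\<Sum>m<s. of_real (Is j m) * g m)" and "l < s"
  shows "gamma Y l = (if l = 0 then 1 else 0) + q * (\<Sum>m<s. of_real (Xs l m) * g m)"
proof -
  have "gamma Y l = (\<Sum>j<k. of_real (quad_weight \<tau> k j * orth_leg l (\<tau> j))
      + q * (\<Sum>m<s. of_real (quad_weight \<tau> k j * orth_leg l (\<tau> j) * Is j m) * g m))"
    unfolding gamma_def
  proof (intro sum.cong refl)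
    fix j assume "j \<in> {..<k}"
    then have "Y j = 1 + q * (\<Sum>m<s. of_real (Is j m) * g m)"
      using assms(1) by simp
    then show "of_real (quad_weight \<tau> k j * orth_leg l (\<tau> j)) * Y j = of_real (quad_weight \<tau> k j * orth_leg l (\<tau> j))
      + q * (\<Sum>m<s. of_real (quad_weight \<tau> k j * orth_leg l (\<tau> j) * Is j m) * g m)"
      by (simp add: distrib_left sum_distrib_left algebra_simps)
  qed
  also have "\<dots> = of_real (\<Sum>j<k. quad_weight \<tau> k j * orth_leg l (\<tau> j))
      + q * (\<Sum>m<s. \<Sum>j<k. of_real (quad_weight \<tau> k j * orth_leg l (\<tau> j) * Is j m) * g m)"
    unfolding sum.distrib of_real_sum sum_distrib_left[symmetric] by (subst sum.swap) simp
  also have "\<dots> = (if l = 0 then 1 else 0) + q * (\<Sum>m<s. of_real (Xs l m) * g m)"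
    using assms(2) by (simp add: quadrature_orth_leg Xs_def of_real_sum sum_distrib_right)
  finally show ?thesis .
qed

lemma
  assumes "rk_stages_ok (hbvm_A \<tau> k s) k q Y"
  shows stages_ok_eq_stages: "Y = stages q (gamma Y)"
    and stages_ok_gamma_system: "gamma_system Xs s 1 q (gamma Y)"
proof -
  have Y: "\<forall>j<k. Y j = 1 + q * (\<Sum>l<s. of_real (Is j l) * gamma Y l)"
    using assms by (simp add: rk_stages_ok_def hbvm_A_stage_sum)
  then show "Y = stages q (gamma Y)"
    using assms by (auto simp: fun_eq_iff stages_def rk_stages_ok_def)
  show "gamma_system Xs s 1 q (gamma Y)"
    using gamma_of_stage_form[OF Y] by (simp add: gamma_system_def)
qed

lemma gamma_system_stages_ok:
  assumes "gamma_system Xs s 1 q g"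
  shows "rk_stages_ok (hbvm_A \<tau> k s) k q (stages q g)"
proof -
  have "gamma (stages q g) l = g l" if "l < s" for l
    using gamma_of_stage_form[of "stages q g" q g l] assms that by (simp add: stages_def gamma_system_def)
  then have "(\<Sum>j<k. of_real (hbvm_A \<tau> k s i j) * stages q g j) = (\<Sum>l<s. of_real (Is i l) * g l)" for i
    unfolding hbvm_A_stage_sum by (intro sum.cong) simp_all
  then show ?thesis
    by (simp add: rk_stages_ok_def stages_def)
qed

lemma unique_stages:
  assumes "Re q < 0"
  shows "\<exists>!Y. rk_stages_ok (hbvm_A \<tau> k s) k q Y"
proof -
  obtain g where g: "gamma_system Xs s 1 q g"
    using gamma_system_solvable[OF assms] by blast
  have "Y = stages q g" if "rk_stages_ok (hbvm_A \<tau> k s) k q Y" for Y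
  proof -
    have "\<forall>l<s. gamma Y l = g l"
      using gamma_system_unique[OF assms stages_ok_gamma_system[OF that] g] by blast
    then have "stages q (gamma Y) = stages q g"
      by (simp add: fun_eq_iff stages_def)
    then show ?thesis
      using stages_ok_eq_stages[OF that] by simp
  qed
  then show ?thesis
    using gamma_system_stages_ok[OF g] by blast
qed

lemma cmod_stability_fun_power2:
  assumes "\<exists>!Y. rk_stages_ok (hbvm_A \<tau> k s) k q Y" and "rk_stages_ok (hbvm_A \<tau> k s) k q Y"
  shows "(cmod (rk_stability_fun (hbvm_A \<tau> k s) (quad_weight \<tau> k) k q))^2
           = 1 + 2 * Re q * (\<Sum>l<s. (cmod (gamma Y l))^2)"
proof -
  have "(\<Sum>j<k. of_real (quad_weight \<tau> k j) * Y j) = gamma Y 0"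
    by (simp add: gamma_def)
  then show ?thesis
    using stability_identity[OF stages_ok_gamma_system[OF assms(2)]]
    by (simp add: rk_stability_fun_eq[OF assms])
qed

lemma abs_stability_region_eq:
  "rk_abs_stability_region (hbvm_A \<tau> k s) (quad_weight \<tau> k) k = {q. Re q < 0}"
proof -
  let ?A = "hbvm_A \<tau> k s" and ?R = "rk_stability_fun (hbvm_A \<tau> k s) (quad_weight \<tau> k) k"
  have "(\<exists>!Y. rk_stages_ok ?A k q Y) \<and> cmod (?R q) < 1 \<longleftrightarrow> Re q < 0" for q
  proof
    assume "(\<exists>!Y. rk_stages_ok ?A k q Y) \<and> cmod (?R q) < 1"
    then have unique: "\<exists>!Y. rk_stages_ok ?A k q Y" and "(cmod (?R q))^2 < 1"
      by (simp_all add: power_less_one_iff)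
    then obtain Y where Y: "rk_stages_ok ?A k q Y"
      by blast
    have "Re q * (\<Sum>l<s. (cmod (gamma Y l))^2) < 0"
      using \<open>(cmod (?R q))^2 < 1\<close> cmod_stability_fun_power2[OF unique Y] by simp
    then show "Re q < 0"
      by (meson mult_less_0_iff not_le sum_nonneg zero_le_power2)
  next
    assume "Re q < 0"
    then have unique: "\<exists>!Y. rk_stages_ok ?A k q Y"
      by (rule unique_stages)
    then obtain Y where Y: "rk_stages_ok ?A k q Y"
      by blast
    have "Re q * (\<Sum>l<s. (cmod (gamma Y l))^2) < 0"
      using \<open>Re q < 0\<close> gamma_system_norm_pos[OF stages_ok_gamma_system[OF Y]] by (rule mult_neg_pos)
    then have "(cmod (?R q))^2 < 1"
      using cmod_stability_fun_power2[OF unique Y] by simp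
    then show "(\<exists>!Y. rk_stages_ok ?A k q Y) \<and> cmod (?R q) < 1"
      using unique by (simp add: power_less_one_iff)
  qed
  then show ?thesis
    unfolding rk_abs_stability_region_def by blast
qed

end

theorem theorem1p2:
  fixes k s :: nat and \<tau> :: "nat \<Rightarrow> real"
  assumes "1 \<le> s" and "s \<le> k"
    and "inj_on \<tau> {..<k}"
    and "\<forall>i<k. \<tau> i \<in> {0..1}"
    and "\<forall>p :: real poly. degree p < 2 * s \<longrightarrow>
           (\<Sum>i<k. quad_weight \<tau> k i * poly p (\<tau> i)) = integral {0..1} (poly p)"
  shows "perfectly_A_stable (hbvm_A \<tau> k s) (quad_weight \<tau> k) k"
proof -
  interpret hbvm \<tau> k s
    using assms(1,4,5) by unfold_locales auto
  show ?thesis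
    by (simp add: perfectly_A_stable_def abs_stability_region_eq)
qed

end
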